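(* Assume $0<\underline{d}_w<\overline{d}_w\le L\cos(\underline{\theta}_w)<L/\cos(\underline{\theta}_w)$, where $\underline{\theta}_w\in(0,\pi/2)$, and consider $$\max_{P,d_w,\theta_w}\ \gamma_b(P,d_w,\theta_w)\quad\text{s.t.}\quad \mathcal{D}_{01}(P,d_w,\theta_w)\le2\epsilon^2,\ \ 0<P\le P_m,\ \ \underline{d}_w\le d_w\le\overline{d}_w,\ \ \underline{\theta}_w\le\theta_w\le\frac{\pi}{2}.$$ Let $\theta_w^\circ(\overline{d}_w)$ be the (unique) maximizer of $\theta_w\mapsto\gamma_b(P,\overline{d}_w,\theta_w)$ over $\theta_w\in[0,\pi/2]$ without constraints (it does not depend on $P>0$). Let $P^{\epsilon}$ be the unique value of $P$ with $\mathcal{D}_{01}(P,\overline{d}_w,\underline{\theta}_w)=2\epsilon^2$, let $\theta_w^{\epsilon}$ be the unique solution in $\theta_w$ of $\mathcal{D}_{01}(P_m,\overline{d}_w,\theta_w)=2\epsilon^2$, and let $(P^j,\theta_w^j)$ be the unique maximizer of $$\max_{P,\theta_w}\ \gamma_b(P,\overline{d}_w,\theta_w)\quad\text{s.t.}\quad \mathcal{D}_{01}(P,\overline{d}_w,\theta_w)=2\epsilon^2,\ \ P\le P_m,\ \ \max\{\underline{\theta}_w,\theta_w^{\epsilon}\}\le\theta_w\le\theta_w^\circ(\overline{d}_w).$$ Then the optimal solution $(d_w^\ast,\theta_w^\ast,P^\ast)$ of the original problem is: (A) $(\overline{d}_w,\underline{\theta}_w,P_m)$ if $\theta_w^\circ(\overline{d}_w)<\underline{\theta}_w$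 and $\mathcal{D}_{01}(P_m,\overline{d}_w,\underline{\theta}_w)\le2\epsilon^2$; (B) $(\overline{d}_w,\underline{\theta}_w,P^{\epsilon})$ if $\theta_w^\circ(\overline{d}_w)<\underline{\theta}_w$ and $\mathcal{D}_{01}(P_m,\overline{d}_w,\underline{\theta}_w)>2\epsilon^2$; (C) $(\overline{d}_w,\theta_w^\circ(\overline{d}_w),P_m)$ if $\underline{\theta}_w\le\theta_w^\circ(\overline{d}_w)\le\arccos(\overline{d}_w/L)$ and $\mathcal{D}_{01}(P_m,\overline{d}_w,\theta_w^\circ(\overline{d}_w))\le2\epsilon^2$; (D) $(\overline{d}_w,\theta_w^j,P^j)$ if $\underline{\theta}_w\le\theta_w^\circ(\overline{d}_w)\le\arccos(\overline{d}_w/L)$ and $\mathcal{D}_{01}(P_m,\overline{d}_w,\theta_w^\circ(\overline{d}_w))>2\epsilon^2$.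
   Context: Setting: Willie and Bob are ground points at distance $L>0$; a UAV lies in the vertical plane through them, on Bob's side, at distance $d_w>0$ from Willie and at elevation angle $\theta_w\in[0,\pi/2]$ (radians) seen from Willie, and transmits with power $P$. Constants: $\xi_{\mathrm{L}}<0$, $\xi_{\mathrm{N}}<0$; $a,b>0$; $\sigma_b^2,\sigma_w^2>0$; $n\in\mathbb{N}$; $\epsilon>0$; $P_m>0$. Define $d_b=\sqrt{L^2+d_w^2-2d_wL\cos(\theta_w)}$, $$p_b=\frac{1}{1+a\exp\!\left(-b\left[\frac{180}{\pi}\arcsin\!\left(\frac{d_w\sin\theta_w}{d_b}\right)-a\right]\right)},\qquad p_w=\frac{1}{1+a\exp\!\left(-b\left[\frac{180}{\pi}\theta_w-a\right]\right)},$$ $f(d_w,\theta_w)=d_b^{\xi_{\mathrm{L}}}p_b$, and $\gamma_b(P,d_w,\theta_w)=Pf(d_w,\theta_w)/\sigma_b^2$. With $\bar P=P d_w^{\xi_{\mathrm{L}}}p_w+P d_w^{\xi_{\mathrm{N}}}$, define $$\mathcal{D}_{01}(P,d_w,\theta_w)=\frac{n}{2}\left[\ln\!\left(\frac{\bar P+\sigma_w^2}{\sigma_w^2}\right)-\frac{\bar P}{\bar P+\sigma_w^2}\right].$$ *)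

theory Defs
  imports Complex_Main
begin

text \<open>Parameters are passed explicitly:
  L (Willie--Bob distance), a b (LoS probability constants), xiL xiN (path-loss
  exponents), sb2 = sigma_b^2, sw2 = sigma_w^2, n (number of channel uses).\<close>

definition d_b :: "real \<Rightarrow> real \<Rightarrow> real \<Rightarrow> real" where
  "d_b L dw th = sqrt (L\<^sup>2 + dw\<^sup>2 - 2 * dw * L * cos th)"

definition p_b :: "real \<Rightarrow> real \<Rightarrow> real \<Rightarrow> real \<Rightarrow> real \<Rightarrow> real" where
  "p_b a b L dw th =
     1 / (1 + a * exp (- b * ((180 / pi) * arcsin (dw * sin th / d_b L dw th) - a)))"

definition p_w :: "real \<Rightarrow> real \<Rightarrow> real \<Rightarrow> real" where
  "p_w a b th = 1 / (1 + a * exp (- b * ((180 / pi) * th - a)))"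

definition f_gain :: "real \<Rightarrow> real \<Rightarrow> real \<Rightarrow> real \<Rightarrow> real \<Rightarrow> real \<Rightarrow> real" where
  "f_gain a b xiL L dw th = d_b L dw th powr xiL * p_b a b L dw th"

definition gamma_b ::
  "real \<Rightarrow> real \<Rightarrow> real \<Rightarrow> real \<Rightarrow> real \<Rightarrow> real \<Rightarrow> real \<Rightarrow> real \<Rightarrow> real" where
  "gamma_b a b xiL L sb2 P dw th = P * f_gain a b xiL L dw th / sb2"

definition Pbar :: "real \<Rightarrow> real \<Rightarrow> real \<Rightarrow> real \<Rightarrow> real \<Rightarrow> real \<Rightarrow> real \<Rightarrow> real" where
  "Pbar a b xiL xiN P dw th = P * dw powr xiL * p_w a b th + P * dw powr xiN"

definition D01 ::
  "real \<Rightarrow> real \<Rightarrow> real \<Rightarrow> real \<Rightarrow> real \<Rightarrow> nat \<Rightarrow> real \<Rightarrow> real \<Rightarrow> real \<Rightarrow> real" where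
  "D01 a b xiL xiN sw2 n P dw th =
     (let Q = Pbar a b xiL xiN P dw th in
       real n / 2 * (ln ((Q + sw2) / sw2) - Q / (Q + sw2)))"

end

theory Submission
  imports Defs
begin

text \<open>
  For a fixed UAV--Willie distance r the gain f(r, .) towards Bob has derivative
  f * r / d_b^2 * S, where the slope factor S = xi_L L sin th + b (180/pi) (1 - p_b) (L cos th - r)
  can only change sign from positive to negative as th grows: its first term decreases, and while
  L cos th > r Bob's elevation angle increases, so 1 - p_b decreases.  Hence f(r, .) increases up
  to its maximizer thO and decreases after it.  Moving the UAV away from Willie up to the distance
  L cos thlo brings it closer to Bob and raises Bob's elevation angle (beyond the foot of the
  perpendicular from Bob the best position is the tangent point th = arccos (r / L)), while Willie's
  received power only drops.  So every feasible point is dominated by a feasible point at distance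
  dhi, and since the covertness measure D01 is increasing in the power received by Willie, which is
  nondecreasing in th, the remaining problem in (P, th) is settled by the unimodality of f.
\<close>

lemma d_b_radicand_eq:
  fixes L r s :: real
  shows "L\<^sup>2 + r\<^sup>2 - 2 * r * L * cos s = (L - r * cos s)\<^sup>2 + (r * sin s)\<^sup>2"
  unfolding power_mult_distrib sin_squared_eq by (simp add: power2_eq_square algebra_simps)

lemma d_b_squared: "(d_b L r s)\<^sup>2 = L\<^sup>2 + r\<^sup>2 - 2 * r * L * cos s"
  unfolding d_b_def d_b_radicand_eq by simp

lemma L_minus_r_cos_pos: "0 \<le> r \<Longrightarrow> r < L \<Longrightarrow> 0 < L - r * cos (s::real)"
  using mult_left_le[OF cos_le_one, of r s] by linarith

lemma d_b_pos:
  assumes "0 \<le> r" "r < L" shows "0 < d_b L r s"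
  using L_minus_r_cos_pos[OF assms, of s] unfolding d_b_def d_b_radicand_eq
  by (simp add: add_pos_nonneg)

lemma d_b_has_derivative:
  assumes "0 \<le> r" "r < L"
  shows "(d_b L r has_real_derivative r * L * sin s / d_b L r s) (at s)"
proof -
  have "0 < L\<^sup>2 + r\<^sup>2 - 2 * r * L * cos s"
    using L_minus_r_cos_pos[OF assms, of s] unfolding d_b_radicand_eq by (simp add: add_pos_nonneg)
  then show ?thesis
    unfolding d_b_def[abs_def]
    by (auto intro!: derivative_eq_intros simp: field_simps)
qed

lemma has_real_derivative_arctan_quotient:
  fixes u v :: "real \<Rightarrow> real"
  assumes "(u has_real_derivative u') (at x)" "(v has_real_derivative v') (at x)" "v x \<noteq> 0"
  shows "((\<lambda>x. arctan (u x / v x)) has_real_derivative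
           (u' * v x - u x * v') / ((v x)\<^sup>2 + (u x)\<^sup>2)) (at x)"
proof -
  have "1 + (u x / v x)\<^sup>2 = ((v x)\<^sup>2 + (u x)\<^sup>2) / (v x)\<^sup>2"
    using assms(3) by (simp add: field_simps)
  then have "inverse (1 + (u x / v x)\<^sup>2) * ((u' * v x - u x * v') / (v x * v x))
      = (u' * v x - u x * v') / ((v x)\<^sup>2 + (u x)\<^sup>2)"
    using assms(3) by (simp add: power2_eq_square)
  then show ?thesis
    using DERIV_chain2[OF DERIV_arctan DERIV_divide[OF assms]] by simp
qed

text \<open>The elevation angle of the UAV seen from Bob, by the sine rule in the triangle
  Willie--Bob--UAV.\<close>

definition bob_elevation :: "real \<Rightarrow> real \<Rightarrow> real \<Rightarrow> real" where
  "bob_elevation L r s = arcsin (r * sin s / d_b L r s)"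

lemma p_b_eq_p_w_bob_elevation: "p_b a b L r s = p_w a b (bob_elevation L r s)"
  unfolding p_b_def p_w_def bob_elevation_def ..

lemma abs_sin_bob_elevation_less:
  assumes "0 \<le> r" "r < L"
  shows "\<bar>r * sin s / d_b L r s\<bar> < 1"
proof -
  have d: "0 < d_b L r s"
    using d_b_pos[OF assms] .
  have "(d_b L r s)\<^sup>2 = (L - r * cos s)\<^sup>2 + (r * sin s)\<^sup>2"
    unfolding d_b_squared d_b_radicand_eq ..
  moreover have "0 < (L - r * cos s)\<^sup>2"
    using L_minus_r_cos_pos[OF assms, of s] by simp
  ultimately have "(r * sin s)\<^sup>2 < (d_b L r s)\<^sup>2"
    by linarith
  then have "\<bar>r * sin s\<bar> < d_b L r s"
    using d by (metis power2_abs power2_less_imp_less less_imp_le)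
  then show ?thesis
    using d by (simp add: abs_divide)
qed

lemma bob_elevation_eq_arctan:
  assumes "0 \<le> r" "r < L"
  shows "bob_elevation L r s = arctan (r * sin s / (L - r * cos s))"
proof -
  define x where "x = r * sin s / d_b L r s"
  have d: "0 < d_b L r s" and c: "0 < L - r * cos s"
    using d_b_pos[OF assms] L_minus_r_cos_pos[OF assms] by auto
  have "1 - x\<^sup>2 = ((d_b L r s)\<^sup>2 - (r * sin s)\<^sup>2) / (d_b L r s)\<^sup>2"
    using d unfolding x_def by (simp add: field_simps)
  also have "\<dots> = ((L - r * cos s) / d_b L r s)\<^sup>2"
    by (simp add: d_b_squared d_b_radicand_eq power_divide)
  finally have "sqrt (1 - x\<^sup>2) = (L - r * cos s) / d_b L r s"
    using c d by simp
  then show ?thesis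
    using abs_sin_bob_elevation_less[OF assms, of s] d c
    unfolding bob_elevation_def x_def[symmetric]
    by (simp add: arcsin_arctan abs_less_iff) (simp add: x_def)
qed

lemma bob_elevation_has_derivative:
  assumes "0 \<le> r" "r < L"
  shows "(bob_elevation L r has_real_derivative r * (L * cos s - r) / (d_b L r s)\<^sup>2) (at s)"
proof -
  have "((\<lambda>s. arctan (r * sin s / (L - r * cos s))) has_real_derivative
      (r * cos s * (L - r * cos s) - r * sin s * (r * sin s)) / ((L - r * cos s)\<^sup>2 + (r * sin s)\<^sup>2))
      (at s)"
    using L_minus_r_cos_pos[OF assms, of s]
    by (intro has_real_derivative_arctan_quotient derivative_eq_intros) auto
  moreover have "r * cos s * (L - r * cos s) - r * sin s * (r * sin s) = r * (L * cos s - r)"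
    unfolding mult.assoc[symmetric] power2_eq_square[symmetric] power_mult_distrib sin_squared_eq
    by (simp add: power2_eq_square algebra_simps)
  moreover have "bob_elevation L r = (\<lambda>s. arctan (r * sin s / (L - r * cos s)))"
    using bob_elevation_eq_arctan[OF assms] by (rule ext)
  ultimately show ?thesis
    by (simp add: d_b_squared d_b_radicand_eq)
qed

lemma bob_elevation_mono:
  assumes "0 \<le> r" "r < L" "0 \<le> s0" "s0 \<le> s" "s \<le> pi" "r \<le> L * cos s"
  shows "bob_elevation L r s0 \<le> bob_elevation L r s"
proof (rule DERIV_nonneg_imp_nondecreasing[OF \<open>s0 \<le> s\<close>])
  fix x assume x: "s0 \<le> x" "x \<le> s"
  have "cos s \<le> cos x"
    using x assms by (intro cos_monotone_0_pi_le) auto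
  then have "0 \<le> L * cos x - r"
    using assms mult_left_mono[of "cos s" "cos x" L] by linarith
  then show "\<exists>y. (bob_elevation L r has_real_derivative y) (at x) \<and> 0 \<le> y"
    using bob_elevation_has_derivative[OF assms(1,2)] assms(1) by force
qed

lemma bob_elevation_sin_le:
  assumes "0 \<le> r" "r < L"
  shows "r * sin s / d_b L r s \<le> r / L"
proof -
  have d: "0 < d_b L r s"
    using d_b_pos[OF assms] .
  have "(d_b L r s)\<^sup>2 = (L * cos s - r)\<^sup>2 + (L * sin s)\<^sup>2"
    unfolding d_b_squared power_mult_distrib sin_squared_eq by (simp add: power2_eq_square algebra_simps)
  then have "(L * sin s)\<^sup>2 \<le> (d_b L r s)\<^sup>2"
    using zero_le_power2[of "L * cos s - r"] by linarith
  then have "L * sin s \<le> d_b L r s"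
    using d by (rule power2_le_imp_le[OF _ less_imp_le])
  then have "r * (L * sin s) \<le> r * d_b L r s"
    using assms(1) by (rule mult_left_mono)
  then show ?thesis
    using d assms by (simp add: divide_le_eq le_divide_eq mult.commute mult.left_commute)
qed

lemma p_w_pos: "0 \<le> a \<Longrightarrow> 0 < p_w a b x"
  unfolding p_w_def by (simp add: add_pos_nonneg)

lemma p_w_le_one: "0 \<le> a \<Longrightarrow> p_w a b x \<le> 1"
  unfolding p_w_def by (simp add: divide_le_eq_1 add_pos_nonneg)

lemma p_w_mono:
  assumes "0 \<le> a" "0 \<le> b"
  shows "mono (p_w a b)"
proof
  fix x y :: real assume "x \<le> y"
  then have "(180 / pi) * x \<le> (180 / pi) * y"
    by (intro mult_left_mono) auto
  then have "- b * ((180 / pi) * y - a) \<le> - b * ((180 / pi) * x - a)"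
    using assms by (intro mult_left_mono_neg) auto
  then have "a * exp (- b * ((180 / pi) * y - a)) \<le> a * exp (- b * ((180 / pi) * x - a))"
    using assms(1) by (intro mult_left_mono) auto
  then show "p_w a b x \<le> p_w a b y"
    unfolding p_w_def using assms(1) by (intro frac_le) (auto intro: add_pos_nonneg)
qed

lemma p_w_has_derivative:
  assumes "0 \<le> a"
  shows "(p_w a b has_real_derivative b * (180 / pi) * p_w a b x * (1 - p_w a b x)) (at x)"
proof -
  have "0 < 1 + a * exp (- b * ((180 / pi) * x - a))"
    using assms by (simp add: add_pos_nonneg)
  then show ?thesis
    unfolding p_w_def[abs_def]
    by (auto intro!: derivative_eq_intros simp: field_simps power2_eq_square)
qed

definition gain_slope :: "real \<Rightarrow> real \<Rightarrow> real \<Rightarrow> real \<Rightarrow> real \<Rightarrow> real \<Rightarrow> real" where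
  "gain_slope a b xi L r s = xi * L * sin s + b * (180 / pi) * (1 - p_b a b L r s) * (L * cos s - r)"

lemma f_gain_pos:
  assumes "0 \<le> a" "0 \<le> r" "r < L"
  shows "0 < f_gain a b xi L r s"
  unfolding f_gain_def p_b_eq_p_w_bob_elevation
  using d_b_pos[OF assms(2,3), of s] p_w_pos[OF assms(1)] by simp

lemma f_gain_has_derivative:
  assumes "0 \<le> a" "0 \<le> r" "r < L"
  shows "(f_gain a b xi L r has_real_derivative
           f_gain a b xi L r s * r / (d_b L r s)\<^sup>2 * gain_slope a b xi L r s) (at s)"
proof -
  define d p where "d = d_b L r s" and "p = p_b a b L r s"
  have d: "0 < d"
    unfolding d_def using d_b_pos[OF assms(2,3)] .
  have "((\<lambda>s. d_b L r s powr xi * p_w a b (bob_elevation L r s)) has_real_derivative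
      d powr xi * (0 * ln d + r * L * sin s / d * xi / d) * p
      + b * (180 / pi) * p * (1 - p) * (r * (L * cos s - r) / d\<^sup>2) * d powr xi) (at s)"
    unfolding d_def p_def p_b_eq_p_w_bob_elevation
    using d_b_pos[OF assms(2,3)]
    by (intro DERIV_mult DERIV_powr DERIV_const d_b_has_derivative assms
        DERIV_chain2[OF p_w_has_derivative bob_elevation_has_derivative])
  moreover have "f_gain a b xi L r = (\<lambda>s. d_b L r s powr xi * p_w a b (bob_elevation L r s))"
    unfolding f_gain_def[abs_def] p_b_eq_p_w_bob_elevation ..
  moreover have "d powr xi * (0 * ln d + r * L * sin s / d * xi / d) * p
      + b * (180 / pi) * p * (1 - p) * (r * (L * cos s - r) / d\<^sup>2) * d powr xi
    = f_gain a b xi L r s * r / d\<^sup>2 * gain_slope a b xi L r s"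
    unfolding f_gain_def gain_slope_def d_def[symmetric] p_def[symmetric]
    using d by (simp add: field_simps power2_eq_square)
  ultimately show ?thesis
    unfolding d_def by simp
qed

lemma gain_slope_nonpos_persists:
  assumes ab: "0 \<le> a" "0 \<le> b" and xi: "xi \<le> 0" and r: "0 \<le> r" "r < L"
    and s: "0 \<le> s0" "s0 \<le> s" "s \<le> pi / 2"
    and slope_s0: "gain_slope a b xi L r s0 \<le> 0"
  shows "gain_slope a b xi L r s \<le> 0"
proof -
  define q where "q t = b * (180 / pi) * (1 - p_b a b L r t)" for t
  have slope: "gain_slope a b xi L r t = xi * L * sin t + q t * (L * cos t - r)" for t
    unfolding gain_slope_def q_def ..
  have q_nonneg: "0 \<le> q t" for t
    unfolding q_def p_b_eq_p_w_bob_elevation using ab p_w_le_one[OF ab(1)] by simp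
  have L: "0 < L"
    using r by linarith
  have sin: "0 \<le> sin s0" "sin s0 \<le> sin s"
    using s by (auto intro: sin_ge_zero sin_monotone_2pi_le)
  have "xi * L * sin s \<le> xi * L * sin s0"
    using sin xi L by (intro mult_left_mono_neg) (auto simp: mult_nonpos_nonneg)
  show ?thesis
  proof (cases "L * cos s \<le> r")
    case True
    have "xi * L * sin s \<le> 0"
      using sin xi L by (simp add: mult_nonpos_nonneg)
    moreover have "q s * (L * cos s - r) \<le> 0"
      using True q_nonneg by (simp add: mult_nonneg_nonpos)
    ultimately show ?thesis
      unfolding slope by linarith
  next
    case False
    have "cos s \<le> cos s0"
      using s by (intro cos_monotone_0_pi_le) auto
    then have A: "0 < L * cos s - r" "L * cos s - r \<le> L * cos s0 - r"
      using False L by auto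
    have "bob_elevation L r s0 \<le> bob_elevation L r s"
      using False s r by (intro bob_elevation_mono) auto
    then have "p_b a b L r s0 \<le> p_b a b L r s"
      unfolding p_b_eq_p_w_bob_elevation using p_w_mono[OF ab] by (rule monoD[rotated])
    then have "q s \<le> q s0"
      unfolding q_def using ab by (intro mult_left_mono) auto
    then have "q s * (L * cos s - r) \<le> q s0 * (L * cos s0 - r)"
      using A q_nonneg by (meson mult_mono order.trans less_imp_le)
    also have "\<dots> \<le> - (xi * L * sin s0)"
      using slope_s0 unfolding slope by linarith
    finally show ?thesis
      unfolding slope using \<open>xi * L * sin s \<le> xi * L * sin s0\<close> by linarith
  qed
qed

lemma antimono_on_after_max_of_single_crossing:
  fixes g g' :: "real \<Rightarrow> real"
  assumes deriv: "\<And>x. lo \<le> x \<Longrightarrow> x \<le> hi \<Longrightarrow> (g has_real_derivative g' x) (at x)"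
    and crossing: "\<And>x y. lo \<le> x \<Longrightarrow> x \<le> y \<Longrightarrow> y \<le> hi \<Longrightarrow> g' x \<le> 0 \<Longrightarrow> g' y \<le> 0"
    and max: "\<And>y. lo \<le> y \<Longrightarrow> y \<le> hi \<Longrightarrow> g y \<le> g t" and t: "lo \<le> t"
  shows "antimono_on {t..hi} g"
proof (cases "t < hi")
  case False
  then have singleton: "x = t" if "x \<in> {t..hi}" for x
    using that by auto
  show ?thesis
  proof (intro monotone_onI)
    fix x y assume "x \<in> {t..hi}" "y \<in> {t..hi}"
    then show "g y \<le> g x"
      using singleton[of x] singleton[of y] by simp
  qed
next
  case True
  have "g' t \<le> 0"
  proof (rule ccontr)
    assume "\<not> g' t \<le> 0"
    then obtain d where d: "d > 0" "\<And>h. 0 < h \<Longrightarrow> h < d \<Longrightarrow> g t < g (t + h)"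
      using DERIV_pos_inc_right[OF deriv] t True by force
    define h where "h = min (d / 2) (hi - t)"
    have "g t < g (t + h)"
      using d True unfolding h_def by (intro d(2)) auto
    moreover have "g (t + h) \<le> g t"
      using d True t unfolding h_def by (intro max) auto
    ultimately show False
      by simp
  qed
  show ?thesis
  proof (intro monotone_onI)
    fix s1 s2 assume s: "s1 \<in> {t..hi}" "s2 \<in> {t..hi}" "s1 \<le> s2"
    have deriv_nonpos: "(g has_real_derivative g' x) (at x) \<and> g' x \<le> 0"
      if "s1 \<le> x" "x \<le> s2" for x
      using \<open>g' t \<le> 0\<close> s t that by (intro conjI deriv crossing[of t x]) auto
    show "g s2 \<le> g s1"
      by (rule DERIV_nonpos_imp_nonincreasing[OF \<open>s1 \<le> s2\<close>]) (use deriv_nonpos in blast)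
  qed
qed

lemma mono_on_before_unique_max_of_single_crossing:
  fixes g g' :: "real \<Rightarrow> real"
  assumes deriv: "\<And>x. lo \<le> x \<Longrightarrow> x \<le> hi \<Longrightarrow> (g has_real_derivative g' x) (at x)"
    and crossing: "\<And>x y. lo \<le> x \<Longrightarrow> x \<le> y \<Longrightarrow> y \<le> hi \<Longrightarrow> g' x \<le> 0 \<Longrightarrow> g' y \<le> 0"
    and unique_max: "\<And>y. lo \<le> y \<Longrightarrow> y \<le> hi \<Longrightarrow> g t \<le> g y \<Longrightarrow> y = t" and t: "t \<le> hi"
  shows "mono_on {lo..t} g"
proof (intro monotone_onI)
  fix s1 s2 assume s: "s1 \<in> {lo..t}" "s2 \<in> {lo..t}" "s1 \<le> s2"
  have "(g has_real_derivative g' x) (at x) \<and> 0 \<le> g' x" if x: "s1 < x" "x < s2" for x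
  proof
    show "(g has_real_derivative g' x) (at x)"
      using s t x by (intro deriv) auto
    show "0 \<le> g' x"
    proof (rule ccontr)
      assume "\<not> 0 \<le> g' x"
      then have deriv_nonpos: "(g has_real_derivative g' y) (at y) \<and> g' y \<le> 0"
        if "x \<le> y" "y \<le> t" for y
        using s x t that by (intro conjI deriv crossing[of x y]) auto
      have "x \<le> t"
        using x s by auto
      then have "g t \<le> g x"
        by (rule DERIV_nonpos_imp_nonincreasing) (use deriv_nonpos in blast)
      then show False
        using unique_max[of x] s x t by auto
    qed
  qed
  moreover have "continuous_on {s1..s2} g"
    using s t by (intro continuous_at_imp_continuous_on ballI DERIV_isCont[OF deriv]) auto
  ultimately show "g s1 \<le> g s2"
    using \<open>s1 \<le> s2\<close> by (metis DERIV_nonneg_imp_increasing_open)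
qed

lemma f_gain_unimodal:
  assumes ab: "0 \<le> a" "0 \<le> b" and xi: "xi \<le> 0" and r: "0 < r" "r < L"
    and t: "0 \<le> t" "t \<le> pi / 2"
    and t_max: "\<And>s. 0 \<le> s \<Longrightarrow> s \<le> pi / 2 \<Longrightarrow> f_gain a b xi L r s \<le> f_gain a b xi L r t"
    and t_unique: "\<And>s. 0 \<le> s \<Longrightarrow> s \<le> pi / 2 \<Longrightarrow> f_gain a b xi L r t \<le> f_gain a b xi L r s \<Longrightarrow> s = t"
  shows "mono_on {0..t} (f_gain a b xi L r)" "antimono_on {t..pi / 2} (f_gain a b xi L r)"
proof -
  define K where "K s = f_gain a b xi L r s * r / (d_b L r s)\<^sup>2" for s
  have K: "0 < K s" for s
    unfolding K_def using f_gain_pos[OF ab(1), of r L] d_b_pos[of r L s] r by simp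
  have deriv: "(f_gain a b xi L r has_real_derivative K s * gain_slope a b xi L r s) (at s)" for s
    unfolding K_def using f_gain_has_derivative[OF ab(1)] r by simp
  have crossing: "K y * gain_slope a b xi L r y \<le> 0"
    if "0 \<le> x" "x \<le> y" "y \<le> pi / 2" "K x * gain_slope a b xi L r x \<le> 0" for x y
    using that gain_slope_nonpos_persists[OF ab xi _ r(2), of x y] K[of x] K[of y] r
    by (simp add: mult_le_0_iff)
  show "mono_on {0..t} (f_gain a b xi L r)"
    by (rule mono_on_before_unique_max_of_single_crossing[OF deriv crossing t_unique t(2)])
  show "antimono_on {t..pi / 2} (f_gain a b xi L r)"
    by (rule antimono_on_after_max_of_single_crossing[OF deriv crossing t_max t(1)])
qed

lemma f_gain_le_by_distance_and_elevation:
  assumes ab: "0 \<le> a" "0 \<le> b" and xi: "xi \<le> 0"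
    and dw: "0 \<le> dw" "dw < L" and r: "0 \<le> r" "r < L"
    and closer: "d_b L r t \<le> d_b L dw th"
    and higher: "dw * sin th / d_b L dw th \<le> r * sin t / d_b L r t"
  shows "f_gain a b xi L dw th \<le> f_gain a b xi L r t"
proof -
  have "- 1 \<le> dw * sin th / d_b L dw th" "r * sin t / d_b L r t \<le> 1"
    using abs_sin_bob_elevation_less[OF dw, of th] abs_sin_bob_elevation_less[OF r, of t]
    unfolding abs_less_iff by linarith+
  then have "bob_elevation L dw th \<le> bob_elevation L r t"
    unfolding bob_elevation_def using higher by (intro arcsin_le_arcsin)
  then have "p_b a b L dw th \<le> p_b a b L r t"
    unfolding p_b_eq_p_w_bob_elevation using p_w_mono[OF ab] by (rule monoD[rotated])
  moreover have "d_b L dw th powr xi \<le> d_b L r t powr xi"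
    using closer xi d_b_pos[OF r] by (intro powr_mono2') auto
  ultimately show ?thesis
    unfolding f_gain_def using d_b_pos[OF r] p_b_eq_p_w_bob_elevation p_w_pos[OF ab(1)]
    by (intro mult_mono) (auto intro: less_imp_le)
qed

lemma f_gain_le_same_angle:
  assumes ab: "0 \<le> a" "0 \<le> b" and xi: "xi \<le> 0"
    and r: "0 \<le> dw" "dw \<le> r" "r < L" "r \<le> L * cos th" and sin: "0 \<le> sin th"
  shows "f_gain a b xi L dw th \<le> f_gain a b xi L r th"
proof (rule f_gain_le_by_distance_and_elevation[OF ab xi])
  have d: "0 < d_b L r th"
    using d_b_pos r by auto
  have "(d_b L r th)\<^sup>2 - (d_b L dw th)\<^sup>2 = (r - dw) * (r + dw - 2 * L * cos th)"
    unfolding d_b_squared by (simp add: power2_eq_square algebra_simps)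
  also have "\<dots> \<le> 0"
    using r by (intro mult_nonneg_nonpos) auto
  finally have "(d_b L r th)\<^sup>2 \<le> (d_b L dw th)\<^sup>2"
    by simp
  then show closer: "d_b L r th \<le> d_b L dw th"
    by (rule power2_le_imp_le) (use d_b_pos[of dw L th] r in auto)
  have "dw * sin th / d_b L dw th \<le> r * sin th / d_b L dw th"
    using r sin d closer by (intro divide_right_mono mult_right_mono) auto
  also have "\<dots> \<le> r * sin th / d_b L r th"
    using r sin d closer by (intro divide_left_mono) auto
  finally show "dw * sin th / d_b L dw th \<le> r * sin th / d_b L r th" .
qed (use r in auto)

lemma f_gain_le_tangent:
  assumes ab: "0 \<le> a" "0 \<le> b" and xi: "xi \<le> 0"
    and r: "0 \<le> dw" "dw \<le> r" "r < L" "L * cos th \<le> r"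
  shows "f_gain a b xi L dw th \<le> f_gain a b xi L r (arccos (r / L))"
proof (rule f_gain_le_by_distance_and_elevation[OF ab xi])
  define t where "t = arccos (r / L)"
  have L: "0 < L"
    using r by linarith
  have cos_t: "cos t = r / L" and sin_t: "sin t = sqrt (L\<^sup>2 - r\<^sup>2) / L"
    using r L by (auto simp: t_def sin_arccos field_simps real_sqrt_divide)
  have d_t_squared: "(d_b L r t)\<^sup>2 = L\<^sup>2 - r\<^sup>2"
    unfolding d_b_squared cos_t using L by (simp add: power2_eq_square)
  then have d_t: "d_b L r t = sqrt (L\<^sup>2 - r\<^sup>2)"
    using d_b_pos[of r L t] r by (simp add: real_sqrt_unique)
  have "(d_b L r t)\<^sup>2 \<le> (d_b L dw th)\<^sup>2"
  proof -
    have "dw * (L * cos th) \<le> dw * r"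
      using r by (intro mult_left_mono) auto
    then show ?thesis
      unfolding d_t_squared unfolding d_b_squared using r zero_le_power2[of "r - dw"]
      by (simp add: power2_eq_square algebra_simps)
  qed
  then show "d_b L r (arccos (r / L)) \<le> d_b L dw th"
    unfolding t_def[symmetric] by (rule power2_le_imp_le) (use d_b_pos[of dw L th] r in auto)
  have "dw * sin th / d_b L dw th \<le> dw / L"
    using bob_elevation_sin_le r by auto
  also have "\<dots> \<le> r / L"
    using r L by (intro divide_right_mono) auto
  also have "\<dots> = r * sin t / d_b L r t"
    unfolding sin_t d_t using r L by (simp add: field_simps)
  finally show "dw * sin th / d_b L dw th \<le> r * sin (arccos (r / L)) / d_b L r (arccos (r / L))"
    unfolding t_def .
qed (use r in auto)

lemma f_gain_le_at_larger_distance: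
  assumes ab: "0 \<le> a" "0 \<le> b" and xi: "xi \<le> 0" and L: "0 < L"
    and r: "0 \<le> dw" "dw \<le> r" "r \<le> L * cos thlo"
    and th: "0 < thlo" "thlo \<le> th" "th \<le> pi / 2"
  obtains s where "thlo \<le> s" "s \<le> th" "f_gain a b xi L dw th \<le> f_gain a b xi L r s"
proof -
  have "cos thlo < 1"
    using th cos_monotone_0_pi[of 0 thlo] by simp
  then have "L * cos thlo < L"
    using L by simp
  then have rL: "r < L"
    using r by linarith
  show ?thesis
  proof (cases "r \<le> L * cos th")
    case True
    have "0 \<le> sin th"
      using th by (intro sin_ge_zero) auto
    then show ?thesis
      using f_gain_le_same_angle[OF ab xi r(1,2) rL True] th that by auto
  next
    case False
    have "0 \<le> r / L" "r / L \<le> cos thlo" "cos th \<le> r / L"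
      using r False L by (auto simp: field_simps)
    then have "arccos (cos thlo) \<le> arccos (r / L)" "arccos (r / L) \<le> arccos (cos th)"
      using rL L by (auto intro!: arccos_le_arccos)
    then have "thlo \<le> arccos (r / L)" "arccos (r / L) \<le> th"
      using th by (simp_all add: arccos_cos)
    then show ?thesis
      using f_gain_le_tangent[OF ab xi r(1,2) rL] False that by auto
  qed
qed

definition willie_gain :: "real \<Rightarrow> real \<Rightarrow> real \<Rightarrow> real \<Rightarrow> real \<Rightarrow> real \<Rightarrow> real" where
  "willie_gain a b xiL xiN dw th = dw powr xiL * p_w a b th + dw powr xiN"

text \<open>n times the Kullback--Leibler divergence D(N(0, sw2) || N(0, sw2 + Q)).\<close>

definition gaussian_kl :: "nat \<Rightarrow> real \<Rightarrow> real \<Rightarrow> real" where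
  "gaussian_kl n sw2 Q = real n / 2 * (ln ((Q + sw2) / sw2) - Q / (Q + sw2))"

lemma D01_eq_gaussian_kl:
  "D01 a b xiL xiN sw2 n P dw th = gaussian_kl n sw2 (P * willie_gain a b xiL xiN dw th)"
  unfolding D01_def Pbar_def willie_gain_def gaussian_kl_def Let_def by (simp add: algebra_simps)

lemma gaussian_kl_strict_mono:
  assumes "0 < n" "0 < sw2"
  shows "strict_mono_on {0..} (gaussian_kl n sw2)"
proof (rule strict_mono_onI)
  fix Q1 Q2 :: real assume Q: "Q1 \<in> {0..}" "Q2 \<in> {0..}" "Q1 < Q2"
  have pos: "0 < Q1 + sw2" "0 < Q2 + sw2"
    using Q assms by auto
  define t where "t = (Q2 - Q1) / (Q1 + sw2)"
  have t1: "t + 1 = (Q2 + sw2) / (Q1 + sw2)"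
    using pos unfolding t_def by (simp add: field_simps)
  have "(Q2 - Q1) / (Q2 + sw2) = t / (t + 1)"
    using pos unfolding t1 unfolding t_def by simp
  also have "\<dots> < ln (t + 1)"
    using Q pos unfolding t_def by (subst add.commute) (intro ln_add1_gt, auto)
  also have "t + 1 = (Q2 + sw2) / (Q1 + sw2)"
    by (rule t1)
  also have "ln \<dots> = ln ((Q2 + sw2) / sw2) - ln ((Q1 + sw2) / sw2)"
    using pos assms by (simp add: ln_div)
  finally have ln_step: "(Q2 - Q1) / (Q2 + sw2) < ln ((Q2 + sw2) / sw2) - ln ((Q1 + sw2) / sw2)" .
  have "Q2 / (Q2 + sw2) - Q1 / (Q1 + sw2) = sw2 * (Q2 - Q1) / ((Q1 + sw2) * (Q2 + sw2))"
    using pos by (simp add: field_simps)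
  also have "\<dots> \<le> (Q1 + sw2) * (Q2 - Q1) / ((Q1 + sw2) * (Q2 + sw2))"
    using Q pos by (intro divide_right_mono mult_right_mono) auto
  also have "\<dots> = (Q2 - Q1) / (Q2 + sw2)"
    using pos by simp
  finally show "gaussian_kl n sw2 Q1 < gaussian_kl n sw2 Q2"
    unfolding gaussian_kl_def using ln_step assms by (intro mult_strict_left_mono) auto
qed

lemma willie_gain_pos: "0 \<le> a \<Longrightarrow> 0 < dw \<Longrightarrow> 0 < willie_gain a b xiL xiN dw th"
  unfolding willie_gain_def using p_w_pos[of a b th] by (simp add: add_nonneg_pos)

lemma willie_gain_mono:
  assumes "0 \<le> a" "0 \<le> b"
  shows "mono (willie_gain a b xiL xiN dw)"
  unfolding willie_gain_def using p_w_mono[OF assms]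
  by (intro monoI add_right_mono mult_left_mono) (auto dest: monoD)

lemma willie_gain_antimono_distance:
  assumes "0 \<le> a" "xiL \<le> 0" "xiN \<le> 0" "0 < dw" "dw \<le> r"
  shows "willie_gain a b xiL xiN r th \<le> willie_gain a b xiL xiN dw th"
  unfolding willie_gain_def using assms p_w_pos[OF assms(1), of b th]
  by (intro add_mono mult_right_mono powr_mono2') auto

text \<open>The optimization problem of Proposition 1 with the model abstracted: g dw th and w dw th
  are the gains of the channels from the UAV to Bob and to Willie and \<Phi> measures detectability
  in terms of the power received by Willie.  The objective P * g drops the factor 1 / sb2
  of gamma_b.\<close>

locale power_angle_problem =
  fixes g w :: "real \<Rightarrow> real \<Rightarrow> real" and \<Phi> :: "real \<Rightarrow> real"
    and c Pm dlo dhi thlo thhi thO :: real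
  assumes \<Phi>_strict_mono: "strict_mono_on {0..} \<Phi>"
    and w_pos: "\<And>dw th. dlo \<le> dw \<Longrightarrow> dw \<le> dhi \<Longrightarrow> 0 < w dw th"
    and w_mono: "mono (w dhi)"
    and g_pos: "\<And>th. thlo \<le> th \<Longrightarrow> th \<le> thhi \<Longrightarrow> 0 < g dhi th"
    and g_mono: "mono_on {thlo..thO} (g dhi)"
    and g_antimono: "antimono_on {thO..thhi} (g dhi)"
    and dominated: "\<And>dw th. dlo \<le> dw \<Longrightarrow> dw \<le> dhi \<Longrightarrow> thlo \<le> th \<Longrightarrow> th \<le> thhi \<Longrightarrow>
      \<exists>s. thlo \<le> s \<and> s \<le> th \<and> g dw th \<le> g dhi s \<and> w dhi s \<le> w dw th"
    and dlo_le_dhi: "dlo \<le> dhi"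
    and Pm_pos: "0 < Pm"
begin

definition feasible :: "real \<Rightarrow> real \<Rightarrow> real \<Rightarrow> bool" where
  "feasible P dw th \<longleftrightarrow> \<Phi> (P * w dw th) \<le> c \<and> 0 < P \<and> P \<le> Pm \<and>
     dlo \<le> dw \<and> dw \<le> dhi \<and> thlo \<le> th \<and> th \<le> thhi"

definition optimal :: "real \<Rightarrow> real \<Rightarrow> real \<Rightarrow> bool" where
  "optimal dw th P \<longleftrightarrow> feasible P dw th \<and>
     (\<forall>P' dw' th'. feasible P' dw' th' \<longrightarrow> P' * g dw' th' \<le> P * g dw th)"

lemma \<Phi>_le_iff: "0 \<le> Q1 \<Longrightarrow> 0 \<le> Q2 \<Longrightarrow> \<Phi> Q1 \<le> \<Phi> Q2 \<longleftrightarrow> Q1 \<le> Q2"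
  using strict_mono_on_less_eq[OF \<Phi>_strict_mono] by simp

lemma g_le_peak: "thlo \<le> s \<Longrightarrow> s \<le> thhi \<Longrightarrow> g dhi s \<le> g dhi thO"
  using mono_onD[OF g_mono, of s thO] monotone_onD[OF g_antimono, of thO s]
  by (cases "s \<le> thO") auto

lemma feasibleD:
  assumes "feasible P dhi s"
  shows "\<Phi> (P * w dhi s) \<le> c" "0 < P" "P \<le> Pm" "thlo \<le> s" "s \<le> thhi" "0 < w dhi s" "0 < g dhi s"
  using assms w_pos[of dhi s] g_pos[of s] dlo_le_dhi unfolding feasible_def by auto

lemma feasible_atI:
  "\<Phi> (P * w dhi s) \<le> c \<Longrightarrow> 0 < P \<Longrightarrow> P \<le> Pm \<Longrightarrow> thlo \<le> s \<Longrightarrow> s \<le> thhi \<Longrightarrow> feasible P dhi s"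
  unfolding feasible_def using dlo_le_dhi by auto

lemma feasible_dominated_at_dhi:
  assumes "feasible P dw th"
  obtains s where "feasible P dhi s" "P * g dw th \<le> P * g dhi s"
proof -
  from assms have fe: "\<Phi> (P * w dw th) \<le> c" "0 < P" "P \<le> Pm" "dlo \<le> dw" "dw \<le> dhi"
    "thlo \<le> th" "th \<le> thhi"
    unfolding feasible_def by auto
  then obtain s where s: "thlo \<le> s" "s \<le> th" "g dw th \<le> g dhi s" "w dhi s \<le> w dw th"
    using dominated by blast
  have "\<Phi> (P * w dhi s) \<le> \<Phi> (P * w dw th)"
    using s fe w_pos[of dhi s] w_pos[of dw th] dlo_le_dhi by (simp add: \<Phi>_le_iff)
  then have "feasible P dhi s"
    using fe s by (intro feasible_atI) auto
  moreover have "P * g dw th \<le> P * g dhi s"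
    using s fe by simp
  ultimately show ?thesis
    using that s by blast
qed

lemma optimalI:
  assumes "feasible P dhi th"
    and "\<And>P' s. feasible P' dhi s \<Longrightarrow> P' * g dhi s \<le> P * g dhi th"
  shows "optimal dhi th P"
  unfolding optimal_def
  by (meson assms feasible_dominated_at_dhi order.trans)

lemma optimal_full_power_at_thlo:
  assumes "thO \<le> thlo" "thlo \<le> thhi" "\<Phi> (Pm * w dhi thlo) \<le> c"
  shows "optimal dhi thlo Pm"
proof (rule optimalI)
  show "feasible Pm dhi thlo"
    using assms Pm_pos by (intro feasible_atI) auto
  fix P s assume "feasible P dhi s"
  note fe = feasibleD[OF this]
  have "g dhi s \<le> g dhi thlo"
    using fe assms by (intro monotone_onD[OF g_antimono]) auto
  then show "P * g dhi s \<le> Pm * g dhi thlo"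
    using fe Pm_pos by (intro mult_mono) auto
qed

lemma optimal_reduced_power_at_thlo:
  assumes "thO \<le> thlo" "thlo \<le> thhi" "c < \<Phi> (Pm * w dhi thlo)"
    and Peps: "0 < Peps" "\<Phi> (Peps * w dhi thlo) = c"
  shows "optimal dhi thlo Peps"
proof (rule optimalI)
  have w: "0 < w dhi thlo"
    using w_pos dlo_le_dhi by auto
  have "\<not> Pm * w dhi thlo \<le> Peps * w dhi thlo"
    using assms w Pm_pos by (auto simp: \<Phi>_le_iff[symmetric])
  then have "Peps \<le> Pm"
    using w by simp
  then show "feasible Peps dhi thlo"
    using assms by (intro feasible_atI) auto
  fix P s assume "feasible P dhi s"
  note fe = feasibleD[OF this]
  have "P * w dhi thlo \<le> P * w dhi s"
    using fe monoD[OF w_mono, of thlo s] by simp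
  also have "\<dots> \<le> Peps * w dhi thlo"
    using fe Peps w \<Phi>_le_iff[of "P * w dhi s" "Peps * w dhi thlo"] by simp
  finally have "P \<le> Peps"
    using w by simp
  moreover have "g dhi s \<le> g dhi thlo"
    using fe assms by (intro monotone_onD[OF g_antimono]) auto
  ultimately show "P * g dhi s \<le> Peps * g dhi thlo"
    using fe Peps by (intro mult_mono) auto
qed

lemma optimal_full_power_at_peak:
  assumes "thlo \<le> thO" "thO \<le> thhi" "\<Phi> (Pm * w dhi thO) \<le> c"
  shows "optimal dhi thO Pm"
proof (rule optimalI)
  show "feasible Pm dhi thO"
    using assms Pm_pos by (intro feasible_atI) auto
  fix P s assume "feasible P dhi s"
  note fe = feasibleD[OF this]
  then show "P * g dhi s \<le> Pm * g dhi thO"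
    using g_le_peak[of s] Pm_pos by (intro mult_mono) auto
qed

lemma optimal_on_power_boundary:
  assumes O: "thlo \<le> thO" "thO \<le> thhi" "c < \<Phi> (Pm * w dhi thO)"
    and theps: "\<Phi> (Pm * w dhi theps) = c"
    and Pj: "\<Phi> (Pj * w dhi thj) = c" "Pj \<le> Pm" "max thlo theps \<le> thj" "thj \<le> thO"
    and Pj_max: "\<And>P s. \<Phi> (P * w dhi s) = c \<Longrightarrow> P \<le> Pm \<Longrightarrow> max thlo theps \<le> s \<Longrightarrow> s \<le> thO \<Longrightarrow>
      P * g dhi s \<le> Pj * g dhi thj"
  shows "optimal dhi thj Pj"
proof -
  text \<open>Q is the largest power at Willie that the covertness constraint allows; every feasible
    point is beaten by the boundary point of angle min s thO, or of angle theps when s < theps.\<close>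
  define Q where "Q = Pm * w dhi theps"
  have w: "0 < w dhi s" for s
    using w_pos dlo_le_dhi by auto
  have Q: "0 < Q" "\<Phi> Q = c"
    using theps w Pm_pos unfolding Q_def by auto
  have Q_less: "Q < Pm * w dhi thO"
    using O Q \<Phi>_le_iff[of "Pm * w dhi thO" Q] w[of thO] Pm_pos by auto
  have "theps \<le> thO"
  proof (rule ccontr)
    assume "\<not> theps \<le> thO"
    then have "w dhi thO \<le> w dhi theps"
      using monoD[OF w_mono, of thO theps] by simp
    then show False
      using Q_less Pm_pos unfolding Q_def by simp
  qed
  have boundary: "Q / w dhi s * g dhi s \<le> Pj * g dhi thj"
    if "max thlo theps \<le> s" "s \<le> thO" for s
  proof (rule Pj_max)
    show "\<Phi> (Q / w dhi s * w dhi s) = c"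
      using Q w[of s] by simp
    have "Q \<le> Pm * w dhi s"
      unfolding Q_def using that monoD[OF w_mono, of theps s] Pm_pos by simp
    then show "Q / w dhi s \<le> Pm"
      using w[of s] by (simp add: divide_le_eq)
  qed (use that in auto)
  have "0 < Q / w dhi thO * g dhi thO"
    using Q w g_pos O by simp
  also have "\<dots> \<le> Pj * g dhi thj"
    using O \<open>theps \<le> thO\<close> by (intro boundary) auto
  finally have "0 < Pj"
    using g_pos[of thj] Pj O by (simp add: zero_less_mult_iff)
  show ?thesis
  proof (rule optimalI)
    show "feasible Pj dhi thj"
      using Pj O \<open>0 < Pj\<close> by (intro feasible_atI) auto
    fix P s assume "feasible P dhi s"
    note fe = feasibleD[OF this]
    have PQ: "P * w dhi s \<le> Q"
      using fe Q \<Phi>_le_iff[of "P * w dhi s" Q] by simp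
    show "P * g dhi s \<le> Pj * g dhi thj"
    proof (cases "theps \<le> s")
      case True
      define s' where "s' = min s thO"
      have "P * w dhi s' \<le> P * w dhi s"
        using fe monoD[OF w_mono, of s' s] unfolding s'_def by simp
      then have "P \<le> Q / w dhi s'"
        using PQ w[of s'] by (simp add: le_divide_eq)
      moreover have "g dhi s \<le> g dhi s'"
        using fe O monotone_onD[OF g_antimono, of thO s] unfolding s'_def by (cases "s \<le> thO") auto
      ultimately have "P * g dhi s \<le> Q / w dhi s' * g dhi s'"
        using fe by (intro mult_mono) auto
      also have "\<dots> \<le> Pj * g dhi thj"
        using True fe O \<open>theps \<le> thO\<close> by (intro boundary) (auto simp: s'_def)
      finally show ?thesis .
    next
      case False
      have "g dhi s \<le> g dhi theps"
        using fe False \<open>theps \<le> thO\<close> by (intro mono_onD[OF g_mono]) auto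
      then have "P * g dhi s \<le> Q / w dhi theps * g dhi theps"
        unfolding Q_def using fe w[of theps] by (intro mult_mono) auto
      also have "\<dots> \<le> Pj * g dhi thj"
        using False fe \<open>theps \<le> thO\<close> by (intro boundary) auto
      finally show ?thesis .
    qed
  qed
qed

end

lemma covert_uav_power_angle_problem:
  assumes ab: "0 \<le> a" "0 \<le> b" and xi: "xiL \<le> 0" "xiN \<le> 0" and L: "0 < L"
    and n: "0 < n" and sw2: "0 < sw2" and Pm: "0 < Pm"
    and d: "0 < dlo" "dlo \<le> dhi" "dhi \<le> L * cos thlo" and th: "0 < thlo" "thlo \<le> pi / 2"
    and thO: "0 \<le> thO" "thO \<le> pi / 2"
    and thO_max: "\<And>s. 0 \<le> s \<Longrightarrow> s \<le> pi / 2 \<Longrightarrow> f_gain a b xiL L dhi s \<le> f_gain a b xiL L dhi thO"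
    and thO_unique: "\<And>s. 0 \<le> s \<Longrightarrow> s \<le> pi / 2 \<Longrightarrow>
      f_gain a b xiL L dhi thO \<le> f_gain a b xiL L dhi s \<Longrightarrow> s = thO"
  shows "power_angle_problem (f_gain a b xiL L) (willie_gain a b xiL xiN) (gaussian_kl n sw2)
           Pm dlo dhi thlo (pi / 2) thO"
proof
  have "cos thlo < 1"
    using th cos_monotone_0_pi[of 0 thlo] by simp
  then have "L * cos thlo < L"
    using L by simp
  then have dhi_L: "dhi < L"
    using d by linarith
  have "0 < dhi"
    using d by linarith
  note unimodal = f_gain_unimodal[OF ab xi(1) this dhi_L thO(1,2) thO_max thO_unique]
  show "mono_on {thlo..thO} (f_gain a b xiL L dhi)"
    using th by (intro mono_on_subset[OF unimodal(1)]) auto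
  show "antimono_on {thO..pi / 2} (f_gain a b xiL L dhi)"
    by (rule unimodal(2))
  show "0 < f_gain a b xiL L dhi th" for th
    using f_gain_pos[OF ab(1)] d dhi_L by simp
  show "\<exists>s. thlo \<le> s \<and> s \<le> th \<and> f_gain a b xiL L dw th \<le> f_gain a b xiL L dhi s \<and>
      willie_gain a b xiL xiN dhi s \<le> willie_gain a b xiL xiN dw th"
    if dw: "dlo \<le> dw" "dw \<le> dhi" and th': "thlo \<le> th" "th \<le> pi / 2" for dw th
  proof -
    obtain s where s: "thlo \<le> s" "s \<le> th" "f_gain a b xiL L dw th \<le> f_gain a b xiL L dhi s"
      using f_gain_le_at_larger_distance[OF ab xi(1) L _ dw(2) d(3) th(1) th'] dw d by auto
    have "willie_gain a b xiL xiN dhi s \<le> willie_gain a b xiL xiN dhi th"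
      using monoD[OF willie_gain_mono[OF ab]] s by simp
    also have "\<dots> \<le> willie_gain a b xiL xiN dw th"
      using willie_gain_antimono_distance[OF ab(1) xi] dw d by simp
    finally show ?thesis
      using s by blast
  qed
qed (use gaussian_kl_strict_mono[OF n sw2] willie_gain_pos[OF ab(1)] willie_gain_mono[OF ab] d Pm in auto)

theorem proposition1:
  fixes L a b xiL xiN sb2 sw2 eps Pm dlo dhi thlo thO :: real
    and n :: nat
  defines "G \<equiv> gamma_b a b xiL L sb2"
      and "D \<equiv> D01 a b xiL xiN sw2 n"
  assumes L_pos: "L > 0"
      and xi: "xiL < 0" "xiN < 0"
      and ab: "a > 0" "b > 0"
      and sig: "sb2 > 0" "sw2 > 0"
      and n_pos: "n \<ge> 1"
      and eps_pos: "eps > 0"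
      and Pm_pos: "Pm > 0"
      and thlo: "0 < thlo" "thlo < pi / 2"
      and dbnd: "0 < dlo" "dlo < dhi" "dhi \<le> L * cos thlo" "L * cos thlo < L / cos thlo"
      \<comment> \<open>thO = theta_w^o(dhi): the unique unconstrained maximizer over [0, pi/2],
          for every P > 0\<close>
      and thO_range: "0 \<le> thO" "thO \<le> pi / 2"
      and thO_max: "\<And>P th. P > 0 \<Longrightarrow> 0 \<le> th \<Longrightarrow> th \<le> pi / 2 \<Longrightarrow> G P dhi th \<le> G P dhi thO"
      and thO_uniq: "\<And>P th. P > 0 \<Longrightarrow> 0 \<le> th \<Longrightarrow> th \<le> pi / 2 \<Longrightarrow>
                        G P dhi th \<ge> G P dhi thO \<Longrightarrow> th = thO"
  shows
    "let feas = (\<lambda>P dw th. D P dw th \<le> 2 * eps\<^sup>2 \<and> 0 < P \<and> P \<le> Pm \<and>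
                   dlo \<le> dw \<and> dw \<le> dhi \<and> thlo \<le> th \<and> th \<le> pi / 2);
         opt = (\<lambda>dw th P. feas P dw th \<and>
                   (\<forall>P' dw' th'. feas P' dw' th' \<longrightarrow> G P' dw' th' \<le> G P dw th))
     in
     \<comment> \<open>(A)\<close>
     ((thO < thlo \<and> D Pm dhi thlo \<le> 2 * eps\<^sup>2) \<longrightarrow> opt dhi thlo Pm) \<and>
     \<comment> \<open>(B): Peps is the unique P > 0 with D(P, dhi, thlo) = 2 eps^2\<close>
     ((thO < thlo \<and> D Pm dhi thlo > 2 * eps\<^sup>2) \<longrightarrow>
        (\<forall>Peps. 0 < Peps \<and> D Peps dhi thlo = 2 * eps\<^sup>2 \<and>
           (\<forall>P. 0 < P \<and> D P dhi thlo = 2 * eps\<^sup>2 \<longrightarrow> P = Peps)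
           \<longrightarrow> opt dhi thlo Peps)) \<and>
     \<comment> \<open>(C)\<close>
     ((thlo \<le> thO \<and> thO \<le> arccos (dhi / L) \<and> D Pm dhi thO \<le> 2 * eps\<^sup>2) \<longrightarrow>
        opt dhi thO Pm) \<and>
     \<comment> \<open>(D): theps is the unique solution in [0, pi/2] of D(Pm, dhi, th) = 2 eps^2, and
          (Pj, thj) is the unique maximizer of the reduced problem\<close>
     ((thlo \<le> thO \<and> thO \<le> arccos (dhi / L) \<and> D Pm dhi thO > 2 * eps\<^sup>2) \<longrightarrow>
        (\<forall>theps Pj thj.
           (0 \<le> theps \<and> theps \<le> pi / 2 \<and> D Pm dhi theps = 2 * eps\<^sup>2 \<and>
            (\<forall>th. 0 \<le> th \<and> th \<le> pi / 2 \<and> D Pm dhi th = 2 * eps\<^sup>2 \<longrightarrow> th = theps)) \<longrightarrow>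
           (let feasj = (\<lambda>P th. D P dhi th = 2 * eps\<^sup>2 \<and> P \<le> Pm \<and>
                            max thlo theps \<le> th \<and> th \<le> thO)
            in feasj Pj thj \<and>
               (\<forall>P th. feasj P th \<longrightarrow> G P dhi th \<le> G Pj dhi thj) \<and>
               (\<forall>P th. feasj P th \<and> G P dhi th \<ge> G Pj dhi thj \<longrightarrow> P = Pj \<and> th = thj))
           \<longrightarrow> opt dhi thj Pj))"
proof -
  have G_le_iff: "G P dw th \<le> G P' dw' th' \<longleftrightarrow>
      P * f_gain a b xiL L dw th \<le> P' * f_gain a b xiL L dw' th'" for P dw th P' dw' th'
    unfolding G_def gamma_b_def using sig(1) by (simp add: divide_le_cancel)
  have D_eq: "D P dw th = gaussian_kl n sw2 (P * willie_gain a b xiL xiN dw th)" for P dw th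
    unfolding D_def by (rule D01_eq_gaussian_kl)
  interpret power_angle_problem "f_gain a b xiL L" "willie_gain a b xiL xiN" "gaussian_kl n sw2"
      "2 * eps\<^sup>2" Pm dlo dhi thlo "pi / 2" thO
    using ab xi L_pos n_pos sig Pm_pos dbnd thlo thO_range
      thO_max[of 1, unfolded G_le_iff] thO_uniq[of 1, unfolded G_le_iff]
    by (intro covert_uav_power_angle_problem) auto
  show ?thesis
    unfolding Let_def G_le_iff D_eq feasible_def[symmetric] optimal_def[symmetric]
    apply (intro conjI impI allI; elim conjE)
    subgoal by (rule optimal_full_power_at_thlo) (use thlo in linarith)+
    subgoal by (rule optimal_reduced_power_at_thlo) (use thlo in linarith)+
    subgoal by (rule optimal_full_power_at_peak) (use thO_range in linarith)+
    subgoal by (rule optimal_on_power_boundary) (use thO_range in \<open>linarith | blast\<close>)+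
    done
qed

end
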